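(* Let $k$ be a field, $n\ge 1$, and let $Q_H$ be the quiver with vertices $x_1,\ldots,x_{n+1},y_1,\ldots,y_n$ and arrows $r_i:x_i\to y_i$, $l_i:y_i\to x_{i+1}$, $a_i:x_i\to x_{i+1}$ for $i=1,\ldots,n$. Put $m_{0i}=a_1\cdots a_{i-1}$ (the stationary path at $x_1$ if $i=1$), $A_i=r_il_i$, $T_i=A_ia_i^{-1}$ and $\alpha_i=m_{0i}T_im_{0i}^{-1}$, a closed walk at $x_1$. Let $i\ge1$, $k'\ge0$ with $i+k'\le n$, and let $I$ be an admissible ideal of $kQ_H$ in which $a_ia_{i+1}\cdots a_{i+k'}+A_iA_{i+1}\cdots A_{i+k'}$ is a minimal relation. Then $\tilde\alpha_i\tilde\alpha_{i+1}\cdots\tilde\alpha_{i+k'}=1$ in $\pi_1(Q_H,I,x_1)$.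
   Context: An ideal $I$ of $kQ$ is admissible if $F^m\subseteq I\subseteq F^2$ for some $m\ge2$, $F$ the arrow ideal. For vertices $x,y$, $I(x,y)=e_x(kQ)e_y\cap I$; a relation $\sum_{j=1}^{r}\lambda_j w_j\in I(x,y)$ ($\lambda_j\in k^*$, $w_j$ distinct paths $x\to y$) is minimal if $r\ge2$ and no proper nonempty subsum lies in $I(x,y)$. Walks are composable sequences of arrows and formal inverses $\alpha^{-1}$. Homotopy $\sim$ is the smallest equivalence relation on walks with $\alpha\alpha^{-1}\sim e_{s(\alpha)}$, $\alpha^{-1}\alpha\sim e_{t(\alpha)}$, $w_j\sim w_l$ for paths occurring in a common minimal relation of $I$, and $u\sim v\Rightarrow wuw'\sim wvw'$. $\pi_1(Q,I,x_1)$ is the group of homotopy classes $\tilde w$ of closed walks at $x_1$. *)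

theory Defs
  imports "HOL-Algebra.Group"
begin

record ('v,'a) quiver =
  verts :: "'v set"
  arrs  :: "'a set"
  src   :: "'a \<Rightarrow> 'v"
  tgt   :: "'a \<Rightarrow> 'v"

text \<open>A path is a start vertex together with a list of arrows, composed left to right
  (so the path r l first traverses r, then l).  The stationary path e_v is (v, []).\<close>
type_synonym ('v,'a) qpath = "'v \<times> 'a list"

fun chain :: "('v,'a) quiver \<Rightarrow> 'v \<Rightarrow> 'a list \<Rightarrow> bool" where
  "chain Q v [] = True"
| "chain Q v (e # es) = (src Q e = v \<and> chain Q (tgt Q e) es)"

fun pend :: "('v,'a) quiver \<Rightarrow> 'v \<Rightarrow> 'a list \<Rightarrow> 'v" where
  "pend Q v [] = v"
| "pend Q v (e # es) = pend Q (tgt Q e) es"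

definition is_path :: "('v,'a) quiver \<Rightarrow> ('v,'a) qpath \<Rightarrow> bool" where
  "is_path Q p = (fst p \<in> verts Q \<and> set (snd p) \<subseteq> arrs Q \<and> chain Q (fst p) (snd p))"

definition path_tgt :: "('v,'a) quiver \<Rightarrow> ('v,'a) qpath \<Rightarrow> 'v" where
  "path_tgt Q p = pend Q (fst p) (snd p)"

text \<open>Elements of kQ: finitely supported k-linear combinations of paths, i.e. functions
  from paths to k with finite support consisting of paths of Q.\<close>
definition pa_carrier :: "('v,'a) quiver \<Rightarrow> (('v,'a) qpath \<Rightarrow> 'k::field) set" where
  "pa_carrier Q = {f. finite {p. f p \<noteq> 0} \<and> (\<forall>p. f p \<noteq> 0 \<longrightarrow> is_path Q p)}"

definition pa_mult :: "('v,'a) quiver \<Rightarrow> (('v,'a) qpath \<Rightarrow> 'k::field)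
    \<Rightarrow> (('v,'a) qpath \<Rightarrow> 'k) \<Rightarrow> (('v,'a) qpath \<Rightarrow> 'k)" where
  "pa_mult Q f g = (\<lambda>p. if is_path Q p then
      (\<Sum>j\<le>length (snd p). f (fst p, take j (snd p)) *
                           g (pend Q (fst p) (take j (snd p)), drop j (snd p)))
    else 0)"

definition pa_ideal :: "('v,'a) quiver \<Rightarrow> (('v,'a) qpath \<Rightarrow> 'k::field) set \<Rightarrow> bool" where
  "pa_ideal Q I =
    (I \<subseteq> pa_carrier Q \<and> (\<lambda>p. 0) \<in> I \<and>
     (\<forall>f\<in>I. \<forall>g\<in>I. (\<lambda>p. f p + g p) \<in> I) \<and>
     (\<forall>c f. f \<in> I \<longrightarrow> (\<lambda>p. c * f p) \<in> I) \<and>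
     (\<forall>f\<in>I. \<forall>g\<in>pa_carrier Q. pa_mult Q f g \<in> I \<and> pa_mult Q g f \<in> I))"

text \<open>F^m, the m-th power of the arrow ideal F: the span of all paths of length at least m.\<close>
definition arrow_pow :: "('v,'a) quiver \<Rightarrow> nat \<Rightarrow> (('v,'a) qpath \<Rightarrow> 'k::field) set" where
  "arrow_pow Q m = {f \<in> pa_carrier Q. \<forall>p. length (snd p) < m \<longrightarrow> f p = 0}"

definition admissible :: "('v,'a) quiver \<Rightarrow> (('v,'a) qpath \<Rightarrow> 'k::field) set \<Rightarrow> bool" where
  "admissible Q I = (pa_ideal Q I \<and> (\<exists>m\<ge>2. arrow_pow Q m \<subseteq> I \<and> I \<subseteq> arrow_pow Q 2))"

definition minimal_relation :: "('v,'a) quiver \<Rightarrow> (('v,'a) qpath \<Rightarrow> 'k::field) set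
    \<Rightarrow> 'v \<Rightarrow> 'v \<Rightarrow> (('v,'a) qpath \<Rightarrow> 'k) \<Rightarrow> bool" where
  "minimal_relation Q I x y \<rho> =
    (\<rho> \<in> I \<and> (\<forall>p. \<rho> p \<noteq> 0 \<longrightarrow> fst p = x \<and> path_tgt Q p = y) \<and>
     card {p. \<rho> p \<noteq> 0} \<ge> 2 \<and>
     (\<forall>S. S \<subset> {p. \<rho> p \<noteq> 0} \<and> S \<noteq> {} \<longrightarrow> (\<lambda>p. if p \<in> S then \<rho> p else 0) \<notin> I))"

datatype 'a letter = Fw 'a | Bw 'a

fun larr :: "'a letter \<Rightarrow> 'a" where
  "larr (Fw a) = a" | "larr (Bw a) = a"

fun lsrc :: "('v,'a) quiver \<Rightarrow> 'a letter \<Rightarrow> 'v" where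
  "lsrc Q (Fw a) = src Q a" | "lsrc Q (Bw a) = tgt Q a"

fun ltgt :: "('v,'a) quiver \<Rightarrow> 'a letter \<Rightarrow> 'v" where
  "ltgt Q (Fw a) = tgt Q a" | "ltgt Q (Bw a) = src Q a"

fun flip_letter :: "'a letter \<Rightarrow> 'a letter" where
  "flip_letter (Fw a) = Bw a" | "flip_letter (Bw a) = Fw a"

fun wchain :: "('v,'a) quiver \<Rightarrow> 'v \<Rightarrow> 'a letter list \<Rightarrow> bool" where
  "wchain Q v [] = True"
| "wchain Q v (l # ls) = (lsrc Q l = v \<and> wchain Q (ltgt Q l) ls)"

fun wend :: "('v,'a) quiver \<Rightarrow> 'v \<Rightarrow> 'a letter list \<Rightarrow> 'v" where
  "wend Q v [] = v"
| "wend Q v (l # ls) = wend Q (ltgt Q l) ls"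

definition is_walk :: "('v,'a) quiver \<Rightarrow> 'v \<times> 'a letter list \<Rightarrow> bool" where
  "is_walk Q w = (fst w \<in> verts Q \<and> (\<forall>l\<in>set (snd w). larr l \<in> arrs Q) \<and> wchain Q (fst w) (snd w))"

definition walk_inv :: "'a letter list \<Rightarrow> 'a letter list" where
  "walk_inv ls = rev (map flip_letter ls)"

inductive htpy :: "('v,'a) quiver \<Rightarrow> (('v,'a) qpath \<Rightarrow> 'k::field) set
    \<Rightarrow> 'v \<times> 'a letter list \<Rightarrow> 'v \<times> 'a letter list \<Rightarrow> bool"
  for Q :: "('v,'a) quiver" and I :: "(('v,'a) qpath \<Rightarrow> 'k::field) set" where
  cancel_fw: "a \<in> arrs Q \<Longrightarrow> htpy Q I (src Q a, [Fw a, Bw a]) (src Q a, [])"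
| cancel_bw: "a \<in> arrs Q \<Longrightarrow> htpy Q I (tgt Q a, [Bw a, Fw a]) (tgt Q a, [])"
| rel: "minimal_relation Q I x y \<rho> \<Longrightarrow> \<rho> p \<noteq> 0 \<Longrightarrow> \<rho> q \<noteq> 0 \<Longrightarrow>
        htpy Q I (fst p, map Fw (snd p)) (fst q, map Fw (snd q))"
| refl: "is_walk Q w \<Longrightarrow> htpy Q I w w"
| sym: "htpy Q I u v \<Longrightarrow> htpy Q I v u"
| trans: "htpy Q I u v \<Longrightarrow> htpy Q I v w \<Longrightarrow> htpy Q I u w"
| cong: "htpy Q I u v \<Longrightarrow> is_walk Q (z, ws) \<Longrightarrow> wend Q z ws = fst u \<Longrightarrow>
         is_walk Q (wend Q (fst u) (snd u), ws') \<Longrightarrow>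
         htpy Q I (z, ws @ snd u @ ws') (z, ws @ snd v @ ws')"

definition hclass :: "('v,'a) quiver \<Rightarrow> (('v,'a) qpath \<Rightarrow> 'k::field) set
    \<Rightarrow> 'v \<times> 'a letter list \<Rightarrow> ('v \<times> 'a letter list) set" where
  "hclass Q I w = {w'. htpy Q I w w'}"

definition pi1 :: "('v,'a) quiver \<Rightarrow> (('v,'a) qpath \<Rightarrow> 'k::field) set \<Rightarrow> 'v
    \<Rightarrow> ('v \<times> 'a letter list) set monoid" where
  "pi1 Q I x =
    \<lparr>carrier = {hclass Q I (x, ws) | ws. is_walk Q (x, ws) \<and> wend Q x ws = x},
     mult = (\<lambda>A B. hclass Q I (x, snd (SOME a. a \<in> A) @ snd (SOME b. b \<in> B))),
     one = hclass Q I (x, [])\<rparr>"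

datatype qhv = X nat | Y nat
datatype qha = Rarr nat | Larr nat | Aarr nat

fun qh_src :: "qha \<Rightarrow> qhv" where
  "qh_src (Rarr i) = X i" | "qh_src (Larr i) = Y i" | "qh_src (Aarr i) = X i"

fun qh_tgt :: "qha \<Rightarrow> qhv" where
  "qh_tgt (Rarr i) = Y i" | "qh_tgt (Larr i) = X (Suc i)" | "qh_tgt (Aarr i) = X (Suc i)"

definition QH :: "nat \<Rightarrow> (qhv, qha) quiver" where
  "QH n = \<lparr>verts = {X j | j. 1 \<le> j \<and> j \<le> n + 1} \<union> {Y j | j. 1 \<le> j \<and> j \<le> n},
           arrs = {Rarr j | j. 1 \<le> j \<and> j \<le> n} \<union> {Larr j | j. 1 \<le> j \<and> j \<le> n}
                  \<union> {Aarr j | j. 1 \<le> j \<and> j \<le> n},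
           src = qh_src, tgt = qh_tgt\<rparr>"

definition m0 :: "nat \<Rightarrow> qha letter list" where
  "m0 i = map (\<lambda>j. Fw (Aarr j)) [1..<i]"

definition T_walk :: "nat \<Rightarrow> qha letter list" where
  "T_walk i = [Fw (Rarr i), Fw (Larr i), Bw (Aarr i)]"

definition alpha :: "nat \<Rightarrow> qha letter list" where
  "alpha i = m0 i @ T_walk i @ walk_inv (m0 i)"

definition a_path :: "nat \<Rightarrow> nat \<Rightarrow> (qhv, qha) qpath" where
  "a_path i k = (X i, map Aarr [i..<i + k + 1])"

definition A_path :: "nat \<Rightarrow> nat \<Rightarrow> (qhv, qha) qpath" where
  "A_path i k = (X i, concat (map (\<lambda>j. [Rarr j, Larr j]) [i..<i + k + 1]))"

end

theory Submission
  imports Defs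
begin

text \<open>Since m_{0,j+1} = m_{0j} a_j, each alpha_j is conjugate by m_{0i} to
  a_i \<cdots> a_{j-1} T_j (a_i \<cdots> a_{j-1})^{-1}, so in the product alpha_i \<cdots> alpha_{i+k}
  all inner factors cancel and it is homotopic to the conjugate of
  (A_i \<cdots> A_{i+k}) (a_i \<cdots> a_{i+k})^{-1} by m_{0i}.  The minimal relation makes the paths
  A_i \<cdots> A_{i+k} and a_i \<cdots> a_{i+k} homotopic, so this conjugate is trivial.\<close>

definition quiver_wf :: "('v,'a) quiver \<Rightarrow> bool" where
  "quiver_wf Q = (\<forall>a\<in>arrs Q. src Q a \<in> verts Q \<and> tgt Q a \<in> verts Q)"

lemma wchain_append: "wchain Q v (xs @ ys) = (wchain Q v xs \<and> wchain Q (wend Q v xs) ys)"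
  by (induction xs arbitrary: v) auto

lemma wend_append: "wend Q v (xs @ ys) = wend Q (wend Q v xs) ys"
  by (induction xs arbitrary: v) auto

lemma wchain_map_Fw: "wchain Q v (map Fw ps) = chain Q v ps"
  by (induction ps arbitrary: v) auto

lemma wend_map_Fw: "wend Q v (map Fw ps) = pend Q v ps"
  by (induction ps arbitrary: v) auto

lemma flip_letter_flip_letter [simp]: "flip_letter (flip_letter c) = c"
  by (cases c) auto

lemma larr_flip_letter [simp]: "larr (flip_letter c) = larr c"
  by (cases c) auto

lemma walk_inv_Nil [simp]: "walk_inv [] = []"
  by (simp add: walk_inv_def)

lemma walk_inv_Cons: "walk_inv (c # u) = walk_inv u @ [flip_letter c]"
  by (simp add: walk_inv_def)

lemma walk_inv_append: "walk_inv (xs @ ys) = walk_inv ys @ walk_inv xs"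
  by (simp add: walk_inv_def)

lemma walk_inv_walk_inv [simp]: "walk_inv (walk_inv u) = u"
  by (simp add: walk_inv_def rev_map comp_def)

lemma wchain_walk_inv:
  "wchain Q v ws \<Longrightarrow> wchain Q (wend Q v ws) (walk_inv ws) \<and> wend Q (wend Q v ws) (walk_inv ws) = v"
proof (induction ws arbitrary: v)
  case (Cons c ws)
  have "lsrc Q (flip_letter c) = ltgt Q c" "ltgt Q (flip_letter c) = lsrc Q c"
    by (cases c; simp)+
  with Cons show ?case by (auto simp: walk_inv_Cons wchain_append wend_append)
qed simp

lemma wend_in_verts:
  assumes "quiver_wf Q" "v \<in> verts Q" "\<forall>l\<in>set ws. larr l \<in> arrs Q" "wchain Q v ws"
  shows "wend Q v ws \<in> verts Q"
  using assms(2-)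
proof (induction ws arbitrary: v)
  case (Cons l ws)
  have "ltgt Q l \<in> verts Q"
    using Cons.prems assms(1) by (cases l) (auto simp: quiver_wf_def)
  with Cons show ?case by auto
qed simp

lemma is_walk_Nil [simp]: "is_walk Q (v, []) = (v \<in> verts Q)"
  by (simp add: is_walk_def)

lemma is_walk_append:
  assumes "quiver_wf Q"
  shows "is_walk Q (v, xs @ ys) = (is_walk Q (v, xs) \<and> is_walk Q (wend Q v xs, ys))"
  using wend_in_verts[OF assms, of v xs] by (auto simp: is_walk_def wchain_append)

lemma is_walk_walk_inv:
  assumes "quiver_wf Q" "is_walk Q (v, ws)"
  shows "is_walk Q (wend Q v ws, walk_inv ws) \<and> wend Q (wend Q v ws) (walk_inv ws) = v"
  using assms wend_in_verts[OF assms(1)] wchain_walk_inv[of Q v ws]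
  by (auto simp: is_walk_def walk_inv_def)

lemma htpy_walks:
  assumes "quiver_wf Q" "I \<subseteq> pa_carrier Q"
  shows "htpy Q I u v \<Longrightarrow> is_walk Q u \<and> is_walk Q v \<and> fst u = fst v \<and>
     wend Q (fst u) (snd u) = wend Q (fst v) (snd v)"
proof (induction rule: htpy.induct)
  case (rel x y \<rho> p q)
  then have "\<rho> \<in> pa_carrier Q" and
    ends: "\<forall>p. \<rho> p \<noteq> 0 \<longrightarrow> fst p = x \<and> path_tgt Q p = y"
    using assms(2) by (auto simp: minimal_relation_def)
  then have "is_path Q p" "is_path Q q"
    using rel(2,3) unfolding pa_carrier_def mem_Collect_eq by blast+
  moreover have "fst p = x" "fst q = x" "path_tgt Q p = y" "path_tgt Q q = y"
    using ends rel(2,3) by blast+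
  ultimately show ?case
    by (auto simp: is_walk_def is_path_def wchain_map_Fw wend_map_Fw path_tgt_def)
next
  case (cong u v z ws ws')
  then show ?case
    using assms(1) by (cases u, cases v) (auto simp: is_walk_append wend_append)
qed (use assms(1) in \<open>auto simp: is_walk_def quiver_wf_def\<close>)

lemma htpy_append_cong:
  assumes "quiver_wf Q" "htpy Q I (y, u) (y, v)"
    and "is_walk Q (z, ws @ u @ ws')" "wend Q z ws = y"
  shows "htpy Q I (z, ws @ u @ ws') (z, ws @ v @ ws')"
proof -
  have "is_walk Q (z, ws)" "is_walk Q (wend Q y u, ws')"
    using assms(3,4) is_walk_append[OF assms(1)] by auto
  with htpy.cong[OF assms(2)] assms(4) show ?thesis by simp
qed

lemma htpy_cancel_letter:
  assumes "quiver_wf Q" "is_walk Q (z, ws @ [c, flip_letter c] @ ws')"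
  shows "htpy Q I (z, ws @ [c, flip_letter c] @ ws') (z, ws @ ws')"
proof -
  have c: "larr c \<in> arrs Q" and e: "wend Q z ws = lsrc Q c"
    using assms(2) by (auto simp: is_walk_def wchain_append)
  have "htpy Q I (lsrc Q c, [c, flip_letter c]) (lsrc Q c, [])"
    using c by (cases c) (auto intro: htpy.cancel_fw htpy.cancel_bw)
  from htpy_append_cong[OF assms(1) this assms(2) e] show ?thesis by simp
qed

lemma htpy_cancel_walk_inv:
  assumes "quiver_wf Q" "I \<subseteq> pa_carrier Q"
  shows "is_walk Q (z, ws @ u @ walk_inv u @ ws') \<Longrightarrow>
     htpy Q I (z, ws @ u @ walk_inv u @ ws') (z, ws @ ws')"
proof (induction u arbitrary: ws ws')
  case Nil
  then show ?case by (simp add: htpy.refl)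
next
  case (Cons c u)
  have "ws @ (c # u) @ walk_inv (c # u) @ ws' = (ws @ [c]) @ u @ walk_inv u @ (flip_letter c # ws')"
    by (simp add: walk_inv_Cons)
  with Cons.IH[of "ws @ [c]" "flip_letter c # ws'"] Cons.prems
  have inner: "htpy Q I (z, ws @ (c # u) @ walk_inv (c # u) @ ws') (z, ws @ [c, flip_letter c] @ ws')"
    by simp
  then have "is_walk Q (z, ws @ [c, flip_letter c] @ ws')"
    using htpy_walks[OF assms] by simp
  from htpy.trans[OF inner htpy_cancel_letter[OF assms(1) this]] show ?case .
qed

lemma htpy_conjugate_product:
  assumes "quiver_wf Q" "I \<subseteq> pa_carrier Q"
    and "is_walk Q (z, (M @ P @ walk_inv a @ walk_inv M) @ (M @ a @ T @ walk_inv a @ walk_inv M))"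
  shows "htpy Q I (z, (M @ P @ walk_inv a @ walk_inv M) @ (M @ a @ T @ walk_inv a @ walk_inv M))
                  (z, M @ P @ T @ walk_inv a @ walk_inv M)"
proof -
  let ?w = "(M @ P @ walk_inv a @ walk_inv M) @ (M @ a @ T @ walk_inv a @ walk_inv M)"
  have cancel_M: "htpy Q I (z, ?w) (z, (M @ P) @ walk_inv a @ walk_inv (walk_inv a) @ (T @ walk_inv a @ walk_inv M))"
    using htpy_cancel_walk_inv[OF assms(1,2),
        of z "M @ P @ walk_inv a" "walk_inv M" "a @ T @ walk_inv a @ walk_inv M"] assms(3)
    by simp
  then have "is_walk Q (z, (M @ P) @ walk_inv a @ walk_inv (walk_inv a) @ (T @ walk_inv a @ walk_inv M))"
    using htpy_walks[OF assms(1,2)] by simp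
  from htpy.trans[OF cancel_M htpy_cancel_walk_inv[OF assms(1,2) this]] show ?thesis by simp
qed

lemma htpy_conjugate_trivial:
  assumes "quiver_wf Q" "I \<subseteq> pa_carrier Q" "htpy Q I (y, P) (y, a)"
    and "is_walk Q (z, M @ P @ walk_inv a @ walk_inv M)" "wend Q z M = y"
  shows "htpy Q I (z, M @ P @ walk_inv a @ walk_inv M) (z, [])"
proof -
  have P_to_a: "htpy Q I (z, M @ P @ walk_inv a @ walk_inv M) (z, M @ a @ walk_inv a @ walk_inv M)"
    using htpy_append_cong[OF assms(1,3,4,5)] .
  then have "is_walk Q (z, M @ a @ walk_inv a @ walk_inv M)"
    using htpy_walks[OF assms(1,2)] by simp
  then have cancel_a: "htpy Q I (z, M @ a @ walk_inv a @ walk_inv M) (z, M @ walk_inv M)"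
    using htpy_cancel_walk_inv[OF assms(1,2), of z M a "walk_inv M"] by simp
  then have "is_walk Q (z, [] @ M @ walk_inv M @ [])"
    using htpy_walks[OF assms(1,2)] by simp
  then have "htpy Q I (z, M @ walk_inv M) (z, [])"
    using htpy_cancel_walk_inv[OF assms(1,2), of z "[]" M "[]"] by simp
  with P_to_a cancel_a show ?thesis
    by (blast intro: htpy.trans)
qed

lemma hclass_eq: "htpy Q I w w' \<Longrightarrow> hclass Q I w = hclass Q I w'"
  unfolding hclass_def by (auto intro: htpy.trans htpy.sym)

lemma htpy_snd:
  assumes "quiver_wf Q" "I \<subseteq> pa_carrier Q" "htpy Q I (x, u) w"
  shows "htpy Q I (x, u) (x, snd w)"
  using assms htpy_walks[OF assms] by (cases w) simp

lemma pi1_mult_hclass: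
  assumes wf: "quiver_wf Q" and IC: "I \<subseteq> pa_carrier Q"
    and u: "is_walk Q (x, u)" "wend Q x u = x" and v: "is_walk Q (x, v)"
  shows "hclass Q I (x, u) \<otimes>\<^bsub>pi1 Q I x\<^esub> hclass Q I (x, v) = hclass Q I (x, u @ v)"
proof -
  define a where "a = (SOME a. a \<in> hclass Q I (x, u))"
  define b where "b = (SOME b. b \<in> hclass Q I (x, v))"
  have "a \<in> hclass Q I (x, u)"
    unfolding a_def by (rule someI[of _ "(x, u)"]) (simp add: hclass_def htpy.refl u)
  then have ha: "htpy Q I (x, u) (x, snd a)"
    using htpy_snd[OF wf IC] by (simp add: hclass_def)
  have "b \<in> hclass Q I (x, v)"
    unfolding b_def by (rule someI[of _ "(x, v)"]) (simp add: hclass_def htpy.refl v)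
  then have hb: "htpy Q I (x, v) (x, snd b)"
    using htpy_snd[OF wf IC] by (simp add: hclass_def)
  have "htpy Q I (x, u @ v) (x, snd a @ v)"
    using htpy_append_cong[OF wf ha, of x "[]" v] u v is_walk_append[OF wf] by simp
  moreover have "wend Q x (snd a) = x"
    using htpy_walks[OF wf IC ha] u by simp
  then have "htpy Q I (x, snd a @ v) (x, snd a @ snd b)"
    using htpy_append_cong[OF wf hb, of x "snd a" "[]"] htpy_walks[OF wf IC ha] v
      is_walk_append[OF wf] by simp
  ultimately have "hclass Q I (x, u @ v) = hclass Q I (x, snd a @ snd b)"
    by (rule hclass_eq[OF htpy.trans])
  then show ?thesis by (simp add: pi1_def a_def b_def)
qed

lemma closed_walk_concat:
  assumes "quiver_wf Q" "x \<in> verts Q" "\<forall>w\<in>set ws. is_walk Q (x, w) \<and> wend Q x w = x"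
  shows "is_walk Q (x, concat ws) \<and> wend Q x (concat ws) = x"
  using assms(3)
  by (induction ws) (use assms(2) in \<open>auto simp: is_walk_append[OF assms(1)] wend_append\<close>)

lemma pi1_foldr_hclass:
  assumes "quiver_wf Q" "I \<subseteq> pa_carrier Q" "x \<in> verts Q"
    and "\<forall>w\<in>set ws. is_walk Q (x, w) \<and> wend Q x w = x"
  shows "foldr (\<lambda>w acc. hclass Q I (x, w) \<otimes>\<^bsub>pi1 Q I x\<^esub> acc) ws \<one>\<^bsub>pi1 Q I x\<^esub>
           = hclass Q I (x, concat ws)"
  using assms(4)
proof (induction ws)
  case Nil
  then show ?case by (simp add: pi1_def)
next
  case (Cons w ws)
  then show ?case
    using pi1_mult_hclass[OF assms(1,2), of x w "concat ws"] closed_walk_concat[OF assms(1,3)]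
    by simp
qed

lemma quiver_wf_QH: "quiver_wf (QH n)"
  unfolding quiver_wf_def QH_def by auto

lemma src_QH [simp]: "src (QH n) = qh_src" and tgt_QH [simp]: "tgt (QH n) = qh_tgt"
  by (simp_all add: QH_def)

lemma arrs_QH: "a \<in> arrs (QH n) \<longleftrightarrow> (\<exists>j. 1 \<le> j \<and> j \<le> n \<and> (a = Rarr j \<or> a = Larr j \<or> a = Aarr j))"
  by (auto simp: QH_def)

lemma X_in_verts_QH: "1 \<le> j \<Longrightarrow> j \<le> n + 1 \<Longrightarrow> X j \<in> verts (QH n)"
  by (auto simp: QH_def)

lemma is_walk_a_arrows:
  assumes "1 \<le> i" "i \<le> j" "j \<le> n + 1"
  shows "is_walk (QH n) (X i, map (\<lambda>l. Fw (Aarr l)) [i..<j])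
         \<and> wend (QH n) (X i) (map (\<lambda>l. Fw (Aarr l)) [i..<j]) = X j"
  using assms
proof (induction j)
  case (Suc j)
  then show ?case
    by (cases "i = Suc j") (auto simp: is_walk_def arrs_QH wchain_append wend_append X_in_verts_QH)
qed simp

lemma m0_split: "1 \<le> i \<Longrightarrow> i \<le> j \<Longrightarrow> m0 j = m0 i @ map (\<lambda>l. Fw (Aarr l)) [i..<j]"
  unfolding m0_def by (metis le_add_diff_inverse map_append upt_add_eq_append)

lemma is_walk_m0:
  "1 \<le> j \<Longrightarrow> j \<le> n + 1 \<Longrightarrow> is_walk (QH n) (X 1, m0 j) \<and> wend (QH n) (X 1) (m0 j) = X j"
  using is_walk_a_arrows[of 1 j n] by (simp add: m0_def)

lemma is_walk_alpha:
  assumes "1 \<le> j" "j \<le> n"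
  shows "is_walk (QH n) (X 1, alpha j) \<and> wend (QH n) (X 1) (alpha j) = X 1"
proof -
  have m0: "is_walk (QH n) (X 1, m0 j)" "wend (QH n) (X 1) (m0 j) = X j"
    using is_walk_m0[of j n] assms by auto
  have "is_walk (QH n) (X j, T_walk j)" "wend (QH n) (X j) (T_walk j) = X j"
    using assms X_in_verts_QH[of j n] by (auto simp: T_walk_def is_walk_def arrs_QH)
  with m0 is_walk_walk_inv[OF quiver_wf_QH m0(1)] show ?thesis
    by (simp add: alpha_def is_walk_append[OF quiver_wf_QH] wend_append)
qed

lemma a_path_Suc: "snd (a_path i (Suc k)) = snd (a_path i k) @ [Aarr (i + k + 1)]"
  by (simp add: a_path_def)

lemma A_path_Suc: "snd (A_path i (Suc k)) = snd (A_path i k) @ [Rarr (i + k + 1), Larr (i + k + 1)]"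
  by (simp add: A_path_def)

lemma alpha_conjugate_m0:
  "1 \<le> i \<Longrightarrow> alpha (i + k + 1) = m0 i @ map Fw (snd (a_path i k)) @ T_walk (i + k + 1)
     @ walk_inv (map Fw (snd (a_path i k))) @ walk_inv (m0 i)"
proof -
  assume "1 \<le> i"
  then have "m0 (i + k + 1) = m0 i @ map Fw (snd (a_path i k))"
    using m0_split[of i "i + k + 1"] by (simp add: a_path_def comp_def)
  then show ?thesis by (simp add: alpha_def walk_inv_append)
qed

lemma htpy_alpha_product:
  assumes IC: "I \<subseteq> pa_carrier (QH n)" and "1 \<le> i"
  shows "i + k \<le> n \<Longrightarrow> htpy (QH n) I (X 1, concat (map alpha [i..<i + k + 1]))
     (X 1, m0 i @ map Fw (snd (A_path i k)) @ walk_inv (map Fw (snd (a_path i k))) @ walk_inv (m0 i))"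
proof (induction k)
  case 0
  then show ?case
    using htpy.refl[of "QH n" _ I] is_walk_alpha[of i n] assms(2)
    by (simp add: alpha_def T_walk_def A_path_def a_path_def walk_inv_def)
next
  case (Suc k)
  let ?j = "i + k + 1"
  let ?M = "m0 i" and ?P = "map Fw (snd (A_path i k))" and ?a = "map Fw (snd (a_path i k))"
  have split: "concat (map alpha [i..<i + Suc k + 1]) = concat (map alpha [i..<?j]) @ alpha ?j"
    by simp
  have "\<forall>w\<in>set (map alpha [i..<i + Suc k + 1]). is_walk (QH n) (X 1, w) \<and> wend (QH n) (X 1) w = X 1"
    using is_walk_alpha assms(2) Suc.prems by auto
  from closed_walk_concat[OF quiver_wf_QH _ this] X_in_verts_QH[of 1 n]
  have "is_walk (QH n) (X 1, concat (map alpha [i..<?j]) @ alpha ?j)"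
    using split by simp
  then have step_IH: "htpy (QH n) I (X 1, concat (map alpha [i..<?j]) @ alpha ?j)
                  (X 1, (?M @ ?P @ walk_inv ?a @ walk_inv ?M) @ alpha ?j)"
    using htpy_append_cong[OF quiver_wf_QH Suc.IH, of "X 1" "[]" "alpha ?j"] Suc.prems split
    by simp
  have "is_walk (QH n) (X 1, (?M @ ?P @ walk_inv ?a @ walk_inv ?M) @ alpha ?j)"
    using htpy_walks[OF quiver_wf_QH IC step_IH] by simp
  then have "htpy (QH n) I (X 1, (?M @ ?P @ walk_inv ?a @ walk_inv ?M) @ alpha ?j)
                  (X 1, ?M @ ?P @ T_walk ?j @ walk_inv ?a @ walk_inv ?M)"
    unfolding alpha_conjugate_m0[OF assms(2)] by (rule htpy_conjugate_product[OF quiver_wf_QH IC])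
  with step_IH have "htpy (QH n) I (X 1, concat (map alpha [i..<?j]) @ alpha ?j)
                  (X 1, ?M @ ?P @ T_walk ?j @ walk_inv ?a @ walk_inv ?M)"
    by (rule htpy.trans)
  moreover have "?M @ ?P @ T_walk ?j @ walk_inv ?a @ walk_inv ?M
      = ?M @ map Fw (snd (A_path i (Suc k))) @ walk_inv (map Fw (snd (a_path i (Suc k)))) @ walk_inv ?M"
    by (simp add: a_path_Suc A_path_Suc T_walk_def walk_inv_append walk_inv_def)
  ultimately show ?case
    by (metis split)
qed

theorem mainTheorem5:
  fixes I :: "((qhv, qha) qpath \<Rightarrow> 'k::field) set" and n i k' :: nat
  assumes "n \<ge> 1" and "i \<ge> 1" and "i + k' \<le> n"
    and "admissible (QH n) I"
    and "minimal_relation (QH n) I (X i) (X (i + k' + 1))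
           (\<lambda>p. if p = a_path i k' \<or> p = A_path i k' then 1 else 0)"
  shows "foldr (\<lambda>j acc. hclass (QH n) I (X 1, alpha j) \<otimes>\<^bsub>pi1 (QH n) I (X 1)\<^esub> acc)
           [i..<i + k' + 1] \<one>\<^bsub>pi1 (QH n) I (X 1)\<^esub>
         = \<one>\<^bsub>pi1 (QH n) I (X 1)\<^esub>"
proof -
  have IC: "I \<subseteq> pa_carrier (QH n)"
    using assms(4) by (simp add: admissible_def pa_ideal_def)
  have X1: "X 1 \<in> verts (QH n)"
    using assms(1) by (simp add: X_in_verts_QH)
  have product: "foldr (\<lambda>j acc. hclass (QH n) I (X 1, alpha j) \<otimes>\<^bsub>pi1 (QH n) I (X 1)\<^esub> acc)
           [i..<i + k' + 1] \<one>\<^bsub>pi1 (QH n) I (X 1)\<^esub>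
         = hclass (QH n) I (X 1, concat (map alpha [i..<i + k' + 1]))"
    using pi1_foldr_hclass[OF quiver_wf_QH IC X1, of "map alpha [i..<i + k' + 1]"]
      is_walk_alpha assms(1-3) by (simp add: foldr_map comp_def)
  have relation: "htpy (QH n) I (X i, map Fw (snd (A_path i k'))) (X i, map Fw (snd (a_path i k')))"
    using htpy.rel[OF assms(5), of "A_path i k'" "a_path i k'"] by (simp add: A_path_def a_path_def)
  note telescoped = htpy_alpha_product[OF IC assms(2,3)]
  have "wend (QH n) (X 1) (m0 i) = X i"
    using is_walk_m0[of i n] assms(2,3) by simp
  with relation htpy_walks[OF quiver_wf_QH IC telescoped]
  have "htpy (QH n) I (X 1, m0 i @ map Fw (snd (A_path i k')) @ walk_inv (map Fw (snd (a_path i k')))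
          @ walk_inv (m0 i)) (X 1, [])"
    using htpy_conjugate_trivial[OF quiver_wf_QH IC] by blast
  with telescoped have "htpy (QH n) I (X 1, concat (map alpha [i..<i + k' + 1])) (X 1, [])"
    by (rule htpy.trans)
  then show ?thesis
    using product hclass_eq by (simp add: pi1_def)
qed

end
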